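(* Let $X\subseteq\mathbb{C}^n$ be a complex analytic variety, $x\in X$, and $M\subseteq\mathcal{O}_{X,x}^p$ an $\mathcal{O}_{X,x}$-submodule of generic rank $k$ on each irreducible component of $X$. Then $M_{S_2}\subseteq M_{S_3}$.
   Context: For an analytic map germ $\psi=(\psi_1,\dots,\psi_p):X\to\mathrm{Hom}(\mathbb{C}^p,\mathbb{C})$ and $h=(h_1,\dots,h_p)$, $\psi\cdot h=\sum_i\psi_ih_i$; $\psi\cdot M$ is the ideal generated by $\{\psi\cdot g:g\in M\}$. For an ideal $I\subseteq\mathcal{O}_{X,x}$, $I_S$ denotes its Lipschitz saturation: $f\in I_S$ iff $\pi_S^*(f)\in\pi_S^*(I)$ where $\pi_S:SB_I(X)\to X$ is the projection from the Pham–Teissier saturation of the blow-up along $I$ (equivalently, $(f\circ\pi_1,f\circ\pi_2)$ lies in the integral closure of the $\mathcal{O}_{X\times X}$-module generated by $(g\circ\pi_1,g\circ\pi_2)$, $g\in I$, with $\pi_1,\pi_2$ the projections $X\times X\to X$). $I_k(M)$ and $I_k(h,M)$ are the ideals of $k\times k$ minors of $[M]$ and $[h,M]$ respectively, $[M]$ a matrix of generators. $M_{S_2}=\{h:\psi\cdot h\in(\psi\cdot M)_S\ \forall\psi\}$; $M_{S_3}=\{h: I_k(h,M)\subseteq(I_k(M))_S\}$. *)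

theory Defs
  imports "HOL-Analysis.Analysis"
begin

text \<open>Points of C^n are elements of complex^'n.  Germs are represented by
functions; all notions below only depend on the values near the base point.\<close>

definition holo_n :: "(complex^'n) set \<Rightarrow> (complex^'n \<Rightarrow> complex) \<Rightarrow> bool" where
  "holo_n U F \<longleftrightarrow> open U \<and>
     (\<forall>z\<in>U. \<exists>L. (F has_derivative L) (at z) \<and> (\<forall>(c::complex) v. L (c *s v) = c * L v))"

definition analytic_variety :: "(complex^'n) set \<Rightarrow> bool" where
  "analytic_variety X \<longleftrightarrow> (\<forall>y\<in>X. \<exists>U Fs. open U \<and> y \<in> U \<and> (\<forall>F\<in>set Fs. holo_n U F) \<and>
       X \<inter> U = {z\<in>U. \<forall>F\<in>set Fs. F z = 0})"

text \<open>f represents an element of O_{X,x}.\<close>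
definition anat :: "(complex^'n) set \<Rightarrow> complex^'n \<Rightarrow> (complex^'n \<Rightarrow> complex) \<Rightarrow> bool" where
  "anat X x f \<longleftrightarrow> (\<exists>U F. open U \<and> x \<in> U \<and> holo_n U F \<and> (\<forall>y\<in>X \<inter> U. f y = F y))"

definition anat_vec :: "(complex^'n) set \<Rightarrow> complex^'n \<Rightarrow> (complex^'n \<Rightarrow> complex^'p) \<Rightarrow> bool" where
  "anat_vec X x h \<longleftrightarrow> (\<forall>i. anat X x (\<lambda>y. h y $ i))"

definition germ_eq :: "(complex^'n) set \<Rightarrow> complex^'n \<Rightarrow> (complex^'n \<Rightarrow> 'b) \<Rightarrow> (complex^'n \<Rightarrow> 'b) \<Rightarrow> bool" where
  "germ_eq X x f g \<longleftrightarrow> (\<exists>U. open U \<and> x \<in> U \<and> (\<forall>y\<in>X \<inter> U. f y = g y))"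

definition ideal_gen :: "(complex^'n) set \<Rightarrow> complex^'n \<Rightarrow> (complex^'n \<Rightarrow> complex) set \<Rightarrow> (complex^'n \<Rightarrow> complex) set" where
  "ideal_gen X x S = {f. anat X x f \<and> (\<exists>(N::nat) as gs. (\<forall>l<N. anat X x (as l) \<and> gs l \<in> S) \<and>
       germ_eq X x f (\<lambda>y. \<Sum>l<N. as l y * gs l y))}"

definition module_gen :: "(complex^'n) set \<Rightarrow> complex^'n \<Rightarrow> (complex^'n \<Rightarrow> complex^'p) set \<Rightarrow> (complex^'n \<Rightarrow> complex^'p) set" where
  "module_gen X x G = {h. anat_vec X x h \<and> (\<exists>(N::nat) as gs. (\<forall>l<N. anat X x (as l) \<and> gs l \<in> G) \<and>
       germ_eq X x h (\<lambda>y. \<Sum>l<N. as l y *s gs l y))}"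

definition curve_germ :: "(complex^'n) set \<Rightarrow> complex^'n \<Rightarrow> (complex \<Rightarrow> complex^'n) \<Rightarrow> bool" where
  "curve_germ X x \<phi> \<longleftrightarrow> \<phi> 0 = x \<and> (\<exists>r>0. (\<forall>i. (\<lambda>t. \<phi> t $ i) holomorphic_on ball 0 r) \<and> \<phi> ` ball 0 r \<subseteq> X)"

text \<open>Lipschitz saturation of the ideal I generated by S: f in I_S iff
 (f o pi1, f o pi2) lies in the integral closure of the O_{X x X}-module generated by
 (g o pi1, g o pi2), g in I; integral closure of modules taken in Gaffney's sense
 (curve criterion): along every analytic curve (phi1,phi2):(C,0) -> (X x X,(x,x)).\<close>
definition lip_sat :: "(complex^'n) set \<Rightarrow> complex^'n \<Rightarrow> (complex^'n \<Rightarrow> complex) set \<Rightarrow> (complex^'n \<Rightarrow> complex) set" where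
  "lip_sat X x S = {f. anat X x f \<and> (\<forall>\<phi>1 \<phi>2. curve_germ X x \<phi>1 \<longrightarrow> curve_germ X x \<phi>2 \<longrightarrow>
      (\<exists>r>0. \<exists>(N::nat) bs gs. (\<forall>l<N. bs l holomorphic_on ball 0 r \<and> gs l \<in> ideal_gen X x S) \<and>
         (\<forall>t\<in>ball 0 r. f (\<phi>1 t) = (\<Sum>l<N. bs l t * gs l (\<phi>1 t)) \<and>
                         f (\<phi>2 t) = (\<Sum>l<N. bs l t * gs l (\<phi>2 t)))))}"

definition kdet :: "nat \<Rightarrow> (nat \<Rightarrow> nat \<Rightarrow> complex) \<Rightarrow> complex" where
  "kdet k A = (\<Sum>\<sigma> | \<sigma> permutes {..<k}. of_int (sign \<sigma>) * (\<Prod>i<k. A i (\<sigma> i)))"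

text \<open>The k x k minors of a matrix of germs A y r c (rows r, columns c).\<close>
definition minors :: "nat \<Rightarrow> (complex^'n \<Rightarrow> 'r \<Rightarrow> 'c \<Rightarrow> complex) \<Rightarrow> (complex^'n \<Rightarrow> complex) set" where
  "minors k A = {(\<lambda>y. kdet k (\<lambda>i l. A y (rs i) (cs l))) | rs cs. True}"

definition mat_of :: "('m \<Rightarrow> complex^'n \<Rightarrow> complex^'p) \<Rightarrow> complex^'n \<Rightarrow> 'p \<Rightarrow> 'm \<Rightarrow> complex" where
  "mat_of g y i j = g j y $ i"

text \<open>[h,M]: first column h (index None), then the generators.\<close>
definition mat_hM :: "(complex^'n \<Rightarrow> complex^'p) \<Rightarrow> ('m \<Rightarrow> complex^'n \<Rightarrow> complex^'p) \<Rightarrow> complex^'n \<Rightarrow> 'p \<Rightarrow> 'm option \<Rightarrow> complex" where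
  "mat_hM h g y i c = (case c of None \<Rightarrow> h y $ i | Some j \<Rightarrow> g j y $ i)"

definition Ik :: "(complex^'n) set \<Rightarrow> complex^'n \<Rightarrow> nat \<Rightarrow> (complex^'n \<Rightarrow> 'r \<Rightarrow> 'c \<Rightarrow> complex) \<Rightarrow> (complex^'n \<Rightarrow> complex) set" where
  "Ik X x k A = ideal_gen X x (minors k A)"

definition pair_dot :: "(complex^'n \<Rightarrow> complex^'p) \<Rightarrow> (complex^'n \<Rightarrow> complex^'p) \<Rightarrow> complex^'n \<Rightarrow> complex" where
  "pair_dot \<psi> h y = (\<Sum>i\<in>UNIV. \<psi> y $ i * h y $ i)"

definition M_S2 :: "(complex^'n) set \<Rightarrow> complex^'n \<Rightarrow> (complex^'n \<Rightarrow> complex^'p) set \<Rightarrow> (complex^'n \<Rightarrow> complex^'p) set" where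
  "M_S2 X x M = {h. anat_vec X x h \<and> (\<forall>\<psi>. anat_vec X x \<psi> \<longrightarrow>
       pair_dot \<psi> h \<in> lip_sat X x ((\<lambda>g. pair_dot \<psi> g) ` M))}"

definition M_S3 :: "(complex^'n) set \<Rightarrow> complex^'n \<Rightarrow> nat \<Rightarrow> ('m \<Rightarrow> complex^'n \<Rightarrow> complex^'p) \<Rightarrow> (complex^'n \<Rightarrow> complex^'p) set" where
  "M_S3 X x k g = {h. anat_vec X x h \<and> Ik X x k (mat_hM h g) \<subseteq> lip_sat X x (minors k (mat_of g))}"

definition analytic_subgerm :: "(complex^'n) set \<Rightarrow> complex^'n \<Rightarrow> (complex^'n) set \<Rightarrow> bool" where
  "analytic_subgerm X x Z \<longleftrightarrow> Z \<subseteq> X \<and> (\<exists>U Fs. open U \<and> x \<in> U \<and> (\<forall>F\<in>set Fs. holo_n U F) \<and>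
       Z \<inter> U = {z\<in>X \<inter> U. \<forall>F\<in>set Fs. F z = 0})"

definition germ_sub :: "complex^'n \<Rightarrow> (complex^'n) set \<Rightarrow> (complex^'n) set \<Rightarrow> bool" where
  "germ_sub x Z Z' \<longleftrightarrow> (\<exists>U. open U \<and> x \<in> U \<and> Z \<inter> U \<subseteq> Z')"

definition irreducible_germ :: "(complex^'n) set \<Rightarrow> complex^'n \<Rightarrow> (complex^'n) set \<Rightarrow> bool" where
  "irreducible_germ X x Z \<longleftrightarrow> analytic_subgerm X x Z \<and> x \<in> Z \<and>
     (\<forall>Z1 Z2. analytic_subgerm X x Z1 \<longrightarrow> analytic_subgerm X x Z2 \<longrightarrow>
        germ_sub x Z (Z1 \<union> Z2) \<longrightarrow> germ_sub x Z Z1 \<or> germ_sub x Z Z2)"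

definition irreducible_component :: "(complex^'n) set \<Rightarrow> complex^'n \<Rightarrow> (complex^'n) set \<Rightarrow> bool" where
  "irreducible_component X x Z \<longleftrightarrow> irreducible_germ X x Z \<and>
     (\<forall>Z'. irreducible_germ X x Z' \<longrightarrow> germ_sub x Z Z' \<longrightarrow> germ_sub x Z' Z)"

definition rank_ge :: "nat \<Rightarrow> ('r \<Rightarrow> 'c \<Rightarrow> complex) \<Rightarrow> bool" where
  "rank_ge k A \<longleftrightarrow> (\<exists>rs cs. kdet k (\<lambda>i l. A (rs i) (cs l)) \<noteq> 0)"

definition generic_rank_on :: "complex^'n \<Rightarrow> (complex^'n) set \<Rightarrow> (complex^'n \<Rightarrow> 'r \<Rightarrow> 'c \<Rightarrow> complex) \<Rightarrow> nat \<Rightarrow> bool" where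
  "generic_rank_on x Z A k \<longleftrightarrow>
     (\<exists>U0. open U0 \<and> x \<in> U0 \<and> (\<forall>y\<in>Z \<inter> U0. \<not> rank_ge (Suc k) (A y))) \<and>
     (\<forall>U. open U \<longrightarrow> x \<in> U \<longrightarrow> (\<exists>y\<in>Z \<inter> U. rank_ge k (A y)))"

end

theory Submission
  imports Defs "Jordan_Normal_Form.Determinant"
begin

text \<open>Let m be a k \<times> k minor of [h,M].  If m does not use the column h it is a minor of [M];
  if it uses h twice it vanishes.  Otherwise Laplace expansion along the h-column gives
  m = \<psi>\<cdot>h, where \<psi> is the vector of cofactors, and \<psi>\<cdot>g_j is the minor of [M] obtained by
  putting g_j in place of h; hence \<psi>\<cdot>M \<subseteq> I_k(M), and h \<in> M_S2 gives
  m \<in> (\<psi>\<cdot>M)_S \<subseteq> (I_k(M))_S.  As (I_k(M))_S is an ideal, I_k(h,M) \<subseteq> (I_k(M))_S.\<close>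

section \<open>Holomorphic germs\<close>

lemma holo_n_const: "holo_n UNIV (\<lambda>y. c)"
  unfolding holo_n_def by (auto intro!: exI[of _ "\<lambda>v. 0"])

lemma holo_n_subset: "holo_n U F \<Longrightarrow> open V \<Longrightarrow> V \<subseteq> U \<Longrightarrow> holo_n V F"
  unfolding holo_n_def by blast

lemma holo_n_add:
  assumes "holo_n U F" "holo_n U G"
  shows "holo_n U (\<lambda>y. F y + G y)"
  unfolding holo_n_def
proof (intro conjI ballI)
  show "open U" using assms unfolding holo_n_def by auto
  fix z assume "z \<in> U"
  then obtain L1 L2 where "(F has_derivative L1) (at z)" "\<forall>(c::complex) v. L1 (c *s v) = c * L1 v"
    "(G has_derivative L2) (at z)" "\<forall>(c::complex) v. L2 (c *s v) = c * L2 v"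
    using assms unfolding holo_n_def by meson
  then show "\<exists>L. ((\<lambda>y. F y + G y) has_derivative L) (at z) \<and> (\<forall>(c::complex) v. L (c *s v) = c * L v)"
    by (intro exI[of _ "\<lambda>v. L1 v + L2 v"]) (auto intro: has_derivative_add simp: distrib_left)
qed

lemma holo_n_mult:
  assumes "holo_n U F" "holo_n U G"
  shows "holo_n U (\<lambda>y. F y * G y)"
  unfolding holo_n_def
proof (intro conjI ballI)
  show "open U" using assms unfolding holo_n_def by auto
  fix z assume "z \<in> U"
  then obtain L1 L2 where "(F has_derivative L1) (at z)" "\<forall>(c::complex) v. L1 (c *s v) = c * L1 v"
    "(G has_derivative L2) (at z)" "\<forall>(c::complex) v. L2 (c *s v) = c * L2 v"
    using assms unfolding holo_n_def by meson
  then show "\<exists>L. ((\<lambda>y. F y * G y) has_derivative L) (at z) \<and> (\<forall>(c::complex) v. L (c *s v) = c * L v)"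
    by (intro exI[of _ "\<lambda>v. F z * L2 v + L1 v * G z"] conjI has_derivative_mult)
      (simp_all add: algebra_simps)
qed

lemma anat_const: "anat X x (\<lambda>y. c)"
  unfolding anat_def using holo_n_const by blast

lemma anat_binop:
  fixes X :: "(complex^'n) set"
  assumes bop: "\<And>(U :: (complex^'n) set) F G. holo_n U F \<Longrightarrow> holo_n U G \<Longrightarrow> holo_n U (\<lambda>y. bop (F y) (G y))"
    and "anat X x f" "anat X x g"
  shows "anat X x (\<lambda>y. bop (f y) (g y))"
proof -
  obtain U F V G where UF: "open U" "x \<in> U" "holo_n U F" "\<forall>y\<in>X \<inter> U. f y = F y"
    and VG: "open V" "x \<in> V" "holo_n V G" "\<forall>y\<in>X \<inter> V. g y = G y"
    using assms(2,3) unfolding anat_def by blast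
  have "holo_n (U \<inter> V) (\<lambda>y. bop (F y) (G y))"
    by (rule bop; rule holo_n_subset) (use UF VG in auto)
  with UF VG show ?thesis
    unfolding anat_def by (intro exI[of _ "U \<inter> V"] exI[of _ "\<lambda>y. bop (F y) (G y)"]) auto
qed

lemmas anat_add = anat_binop[OF holo_n_add] and anat_mult = anat_binop[OF holo_n_mult]

lemma anat_sum: "(\<And>i. i \<in> A \<Longrightarrow> anat X x (f i)) \<Longrightarrow> anat X x (\<lambda>y. \<Sum>i\<in>A. f i y)"
  by (induction A rule: infinite_finite_induct) (auto intro: anat_const anat_add)

lemma anat_prod: "(\<And>i. i \<in> A \<Longrightarrow> anat X x (f i)) \<Longrightarrow> anat X x (\<lambda>y. \<Prod>i\<in>A. f i y)"
  by (induction A rule: infinite_finite_induct) (auto intro: anat_const anat_mult)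

lemma anat_kdet: "(\<And>i l. anat X x (\<lambda>y. A y i l)) \<Longrightarrow> anat X x (\<lambda>y. kdet k (A y))"
  unfolding kdet_def by (intro anat_sum anat_mult anat_const anat_prod)

lemma anat_vec_component: "anat_vec X x h \<Longrightarrow> anat X x (\<lambda>y. h y $ i)"
  unfolding anat_vec_def by blast

lemma germ_eq_refl: "germ_eq X x f f"
  unfolding germ_eq_def by (rule exI[of _ UNIV]) auto

lemma germ_eq_trans: "germ_eq X x f g \<Longrightarrow> germ_eq X x g h \<Longrightarrow> germ_eq X x f h"
  unfolding germ_eq_def by (metis IntE IntI open_Int)

lemma germ_eq_add:
  "germ_eq X x f f' \<Longrightarrow> germ_eq X x g g' \<Longrightarrow> germ_eq X x (\<lambda>y. f y + g y) (\<lambda>y. f' y + g' y)"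
  unfolding germ_eq_def by (metis IntE IntI open_Int)

section \<open>Ideals of germs\<close>

lemma sum_lessThan_add_if:
  "(\<Sum>l<m + (n::nat). if l < m then F l else G (l - m)) = (\<Sum>l<m. F l) + (\<Sum>l<n. G l :: 'a::comm_monoid_add)"
  by (induction n) (auto simp: add.assoc intro: sum.cong)

(* Coefficients and generators are evaluated at independent points t and z, so this serves both
   germ combinations (t = z = y) and combinations along a curve (z = \<phi> t). *)
lemma combination_append:
  fixes bs1 bs2 :: "nat \<Rightarrow> 'a \<Rightarrow> 'c::comm_semiring_0" and gs1 gs2 :: "nat \<Rightarrow> 'b \<Rightarrow> 'c"
  assumes "\<forall>l<m. P (bs1 l) (gs1 l)" and "\<forall>l<n. P (bs2 l) (gs2 l)"
  obtains bs gs where "\<forall>l<m + n. P (bs l) (gs l)"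
    and "\<And>t z. (\<Sum>l<m + n. bs l t * gs l z) = (\<Sum>l<m. bs1 l t * gs1 l z) + (\<Sum>l<n. bs2 l t * gs2 l z)"
proof
  define bs where "bs l = (if l < m then bs1 l else bs2 (l - m))" for l
  define gs where "gs l = (if l < m then gs1 l else gs2 (l - m))" for l
  show "\<forall>l<m + n. P (bs l) (gs l)" using assms unfolding bs_def gs_def by auto
  fix t z
  have "(\<Sum>l<m + n. bs l t * gs l z)
      = (\<Sum>l<m + n. if l < m then bs1 l t * gs1 l z else bs2 (l - m) t * gs2 (l - m) z)"
    unfolding bs_def gs_def by (intro sum.cong) auto
  then show "(\<Sum>l<m + n. bs l t * gs l z) = (\<Sum>l<m. bs1 l t * gs1 l z) + (\<Sum>l<n. bs2 l t * gs2 l z)"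
    using sum_lessThan_add_if[where F = "\<lambda>l. bs1 l t * gs1 l z" and G = "\<lambda>l. bs2 l t * gs2 l z"]
    by simp
qed

definition germ_ideal :: "(complex^'n) set \<Rightarrow> complex^'n \<Rightarrow> (complex^'n \<Rightarrow> complex) set \<Rightarrow> bool" where
  "germ_ideal X x J \<longleftrightarrow> (\<lambda>y. 0) \<in> J \<and> (\<forall>f\<in>J. anat X x f) \<and>
     (\<forall>f g. f \<in> J \<longrightarrow> g \<in> J \<longrightarrow> (\<lambda>y. f y + g y) \<in> J) \<and>
     (\<forall>a f. anat X x a \<longrightarrow> f \<in> J \<longrightarrow> (\<lambda>y. a y * f y) \<in> J) \<and>
     (\<forall>f f'. anat X x f \<longrightarrow> germ_eq X x f f' \<longrightarrow> f' \<in> J \<longrightarrow> f \<in> J)"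

lemma ideal_genI:
  fixes N :: nat
  assumes "anat X x f" "\<forall>l<N. anat X x (as l) \<and> gs l \<in> S"
    and "germ_eq X x f (\<lambda>y. \<Sum>l<N. as l y * gs l y)"
  shows "f \<in> ideal_gen X x S"
  using assms unfolding ideal_gen_def by blast

lemma ideal_genE:
  assumes "f \<in> ideal_gen X x S"
  obtains N :: nat and as gs where "anat X x f" "\<forall>l<N. anat X x (as l) \<and> gs l \<in> S"
    and "germ_eq X x f (\<lambda>y. \<Sum>l<N. as l y * gs l y)"
  using assms unfolding ideal_gen_def by blast

lemma ideal_gen_least:
  assumes J: "germ_ideal X x J" and "S \<subseteq> J"
  shows "ideal_gen X x S \<subseteq> J"
proof
  fix f assume "f \<in> ideal_gen X x S"
  then obtain N :: nat and as gs where f: "anat X x f" and ags: "\<forall>l<N. anat X x (as l) \<and> gs l \<in> S"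
    and ge: "germ_eq X x f (\<lambda>y. \<Sum>l<N. as l y * gs l y)"
    by (rule ideal_genE)
  have "n \<le> N \<Longrightarrow> (\<lambda>y. \<Sum>l<n. as l y * gs l y) \<in> J" for n
  proof (induction n)
    case 0
    then show ?case using J unfolding germ_ideal_def by simp
  next
    case (Suc n)
    then have "anat X x (as n)" "gs n \<in> J" "(\<lambda>y. \<Sum>l<n. as l y * gs l y) \<in> J"
      using ags \<open>S \<subseteq> J\<close> by auto
    then have "(\<lambda>y. (\<Sum>l<n. as l y * gs l y) + as n y * gs n y) \<in> J"
      using J unfolding germ_ideal_def by blast
    then show ?case by simp
  qed
  then show "f \<in> J" using J f ge unfolding germ_ideal_def by blast
qed

lemma ideal_gen_zero: "(\<lambda>y. 0) \<in> ideal_gen X x S"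
  by (rule ideal_genI[where N = 0]) (simp_all add: anat_const germ_eq_refl)

lemma ideal_gen_add:
  assumes "f \<in> ideal_gen X x S" "g \<in> ideal_gen X x S"
  shows "(\<lambda>y. f y + g y) \<in> ideal_gen X x S"
proof -
  obtain m :: nat and as1 gs1 where f: "anat X x f" "\<forall>l<m. anat X x (as1 l) \<and> gs1 l \<in> S"
    "germ_eq X x f (\<lambda>y. \<Sum>l<m. as1 l y * gs1 l y)"
    using assms(1) by (rule ideal_genE)
  obtain n :: nat and as2 gs2 where g: "anat X x g" "\<forall>l<n. anat X x (as2 l) \<and> gs2 l \<in> S"
    "germ_eq X x g (\<lambda>y. \<Sum>l<n. as2 l y * gs2 l y)"
    using assms(2) by (rule ideal_genE)
  obtain as gs where "\<forall>l<m + n. anat X x (as l) \<and> gs l \<in> S"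
    and "\<And>t z. (\<Sum>l<m + n. as l t * gs l z) = (\<Sum>l<m. as1 l t * gs1 l z) + (\<Sum>l<n. as2 l t * gs2 l z)"
    using combination_append[where P = "\<lambda>a g. anat X x a \<and> g \<in> S", OF f(2) g(2)] by blast
  with germ_eq_add[OF f(3) g(3)] show ?thesis
    by (intro ideal_genI[where N = "m + n" and as = as and gs = gs] anat_add f(1) g(1)) simp_all
qed

lemma ideal_gen_mult:
  assumes "anat X x a" "f \<in> ideal_gen X x S"
  shows "(\<lambda>y. a y * f y) \<in> ideal_gen X x S"
proof -
  obtain N :: nat and as gs where "anat X x f" "\<forall>l<N. anat X x (as l) \<and> gs l \<in> S"
    "germ_eq X x f (\<lambda>y. \<Sum>l<N. as l y * gs l y)"
    using assms(2) by (rule ideal_genE)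
  moreover from this have "germ_eq X x (\<lambda>y. a y * f y) (\<lambda>y. \<Sum>l<N. (a y * as l y) * gs l y)"
    unfolding germ_eq_def by (auto simp: sum_distrib_left mult.assoc)
  ultimately show ?thesis using assms(1)
    by (intro ideal_genI[where as = "\<lambda>l y. a y * as l y" and gs = gs] anat_mult) (auto intro: anat_mult)
qed

lemma ideal_gen_germ_eq:
  "anat X x f \<Longrightarrow> germ_eq X x f f' \<Longrightarrow> f' \<in> ideal_gen X x S \<Longrightarrow> f \<in> ideal_gen X x S"
  unfolding ideal_gen_def using germ_eq_trans by blast

lemma germ_ideal_ideal_gen: "germ_ideal X x (ideal_gen X x S)"
  unfolding germ_ideal_def
  by (blast intro: ideal_gen_zero ideal_gen_add ideal_gen_mult ideal_gen_germ_eq elim: ideal_genE)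

lemma subset_ideal_gen: "(\<And>f. f \<in> S \<Longrightarrow> anat X x f) \<Longrightarrow> S \<subseteq> ideal_gen X x S"
  by (intro subsetI ideal_genI[where N = 1 and as = "\<lambda>l y. 1"]) (auto simp: germ_eq_refl anat_const)

section \<open>Lipschitz saturation\<close>

lemma curve_germ_ball_into:
  assumes "curve_germ X x \<phi>" "open U" "x \<in> U"
  obtains e where "e > 0" "\<forall>t\<in>ball 0 e. \<phi> t \<in> X \<inter> U"
proof -
  obtain r where r: "r > 0" "\<forall>i. (\<lambda>t. \<phi> t $ i) holomorphic_on ball 0 r" "\<phi> ` ball 0 r \<subseteq> X" "\<phi> 0 = x"
    using assms(1) unfolding curve_germ_def by blast
  have "continuous_on (ball 0 r) (\<lambda>t. \<chi> i. \<phi> t $ i)"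
    by (intro continuous_on_vec_lambda holomorphic_on_imp_continuous_on) (use r in auto)
  then have "open (\<phi> -` U \<inter> ball 0 r)"
    using assms(2) continuous_on_open_vimage[of "ball 0 r" \<phi>] by simp
  moreover have "0 \<in> \<phi> -` U \<inter> ball 0 r" using r assms(3) by auto
  ultimately obtain e where "e > 0" "ball 0 e \<subseteq> \<phi> -` U \<inter> ball 0 r"
    using open_contains_ball by blast
  with r(3) show ?thesis using that by blast
qed

definition curve_pair_combination ::
    "(complex^'n) set \<Rightarrow> complex^'n \<Rightarrow> (complex^'n \<Rightarrow> complex) set \<Rightarrow>
     (complex \<Rightarrow> complex^'n) \<Rightarrow> (complex \<Rightarrow> complex^'n) \<Rightarrow> (complex^'n \<Rightarrow> complex) \<Rightarrow> bool" where
  "curve_pair_combination X x S \<phi>1 \<phi>2 f \<longleftrightarrow>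
     (\<exists>r>0. \<exists>(N::nat) bs gs. (\<forall>l<N. bs l holomorphic_on ball 0 r \<and> gs l \<in> ideal_gen X x S) \<and>
        (\<forall>t\<in>ball 0 r. f (\<phi>1 t) = (\<Sum>l<N. bs l t * gs l (\<phi>1 t)) \<and>
                       f (\<phi>2 t) = (\<Sum>l<N. bs l t * gs l (\<phi>2 t))))"

lemma lip_sat_iff:
  "f \<in> lip_sat X x S \<longleftrightarrow> anat X x f \<and>
     (\<forall>\<phi>1 \<phi>2. curve_germ X x \<phi>1 \<longrightarrow> curve_germ X x \<phi>2 \<longrightarrow> curve_pair_combination X x S \<phi>1 \<phi>2 f)"
  unfolding lip_sat_def curve_pair_combination_def by simp

lemma curve_pair_combination_ideal_gen:
  "f \<in> ideal_gen X x S \<Longrightarrow> curve_pair_combination X x S \<phi>1 \<phi>2 f"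
  unfolding curve_pair_combination_def
  by (intro exI[of _ 1] conjI exI[of _ "1::nat"] exI[of _ "\<lambda>l t. 1"] exI[of _ "\<lambda>l. f"]) auto

lemma curve_pair_combination_add:
  assumes "curve_pair_combination X x S \<phi>1 \<phi>2 f" "curve_pair_combination X x S \<phi>1 \<phi>2 g"
  shows "curve_pair_combination X x S \<phi>1 \<phi>2 (\<lambda>y. f y + g y)"
proof -
  obtain r1 m bs1 gs1 where "r1 > 0" and f: "\<forall>l<(m::nat). bs1 l holomorphic_on ball 0 r1 \<and> gs1 l \<in> ideal_gen X x S"
    "\<forall>t\<in>ball 0 r1. f (\<phi>1 t) = (\<Sum>l<m. bs1 l t * gs1 l (\<phi>1 t)) \<and> f (\<phi>2 t) = (\<Sum>l<m. bs1 l t * gs1 l (\<phi>2 t))"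
    using assms(1) unfolding curve_pair_combination_def by blast
  obtain r2 n bs2 gs2 where "r2 > 0" and g: "\<forall>l<(n::nat). bs2 l holomorphic_on ball 0 r2 \<and> gs2 l \<in> ideal_gen X x S"
    "\<forall>t\<in>ball 0 r2. g (\<phi>1 t) = (\<Sum>l<n. bs2 l t * gs2 l (\<phi>1 t)) \<and> g (\<phi>2 t) = (\<Sum>l<n. bs2 l t * gs2 l (\<phi>2 t))"
    using assms(2) unfolding curve_pair_combination_def by blast
  define r where "r = min r1 r2"
  have "r > 0" and sub: "ball 0 r \<subseteq> ball 0 r1" "ball 0 r \<subseteq> ball 0 r2"
    using \<open>r1 > 0\<close> \<open>r2 > 0\<close> unfolding r_def by auto
  then have hol: "\<forall>l<m. bs1 l holomorphic_on ball 0 r \<and> gs1 l \<in> ideal_gen X x S"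
    "\<forall>l<n. bs2 l holomorphic_on ball 0 r \<and> gs2 l \<in> ideal_gen X x S"
    using f(1) g(1) holomorphic_on_subset by blast+
  have "\<forall>t\<in>ball 0 r. f (\<phi>1 t) = (\<Sum>l<m. bs1 l t * gs1 l (\<phi>1 t)) \<and> f (\<phi>2 t) = (\<Sum>l<m. bs1 l t * gs1 l (\<phi>2 t))"
    "\<forall>t\<in>ball 0 r. g (\<phi>1 t) = (\<Sum>l<n. bs2 l t * gs2 l (\<phi>1 t)) \<and> g (\<phi>2 t) = (\<Sum>l<n. bs2 l t * gs2 l (\<phi>2 t))"
    using f(2) g(2) sub by blast+
  moreover obtain bs gs where "\<forall>l<m + n. bs l holomorphic_on ball 0 r \<and> gs l \<in> ideal_gen X x S"
    and "\<And>t z. (\<Sum>l<m + n. bs l t * gs l z) = (\<Sum>l<m. bs1 l t * gs1 l z) + (\<Sum>l<n. bs2 l t * gs2 l z)"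
    using combination_append[where P = "\<lambda>b g. b holomorphic_on ball 0 r \<and> g \<in> ideal_gen X x S", OF hol]
    by blast
  ultimately show ?thesis using \<open>r > 0\<close>
    unfolding curve_pair_combination_def
    by (intro exI[of _ r] conjI exI[of _ "m + n"] exI[of _ bs] exI[of _ gs]) auto
qed

lemma curve_pair_combination_mult:
  assumes "anat X x a" "curve_pair_combination X x S \<phi>1 \<phi>2 f"
  shows "curve_pair_combination X x S \<phi>1 \<phi>2 (\<lambda>y. a y * f y)"
proof -
  obtain r N bs gs where "r > 0" "\<forall>l<(N::nat). bs l holomorphic_on ball 0 r \<and> gs l \<in> ideal_gen X x S"
    "\<forall>t\<in>ball 0 r. f (\<phi>1 t) = (\<Sum>l<N. bs l t * gs l (\<phi>1 t)) \<and> f (\<phi>2 t) = (\<Sum>l<N. bs l t * gs l (\<phi>2 t))"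
    using assms(2) unfolding curve_pair_combination_def by blast
  moreover have "\<forall>l<N. (\<lambda>y. a y * gs l y) \<in> ideal_gen X x S"
    using calculation(2) ideal_gen_mult[OF assms(1)] by blast
  ultimately show ?thesis
    unfolding curve_pair_combination_def
    by (intro exI[of _ r] conjI exI[of _ N] exI[of _ bs] exI[of _ "\<lambda>l y. a y * gs l y"])
      (auto simp: sum_distrib_left algebra_simps)
qed

lemma curve_pair_combination_cong:
  assumes "curve_pair_combination X x S \<phi>1 \<phi>2 f'"
    and "e > 0" "\<forall>t\<in>ball 0 e. f (\<phi>1 t) = f' (\<phi>1 t) \<and> f (\<phi>2 t) = f' (\<phi>2 t)"
  shows "curve_pair_combination X x S \<phi>1 \<phi>2 f"
proof -
  obtain r N bs gs where "r > 0" and hol: "\<forall>l<(N::nat). bs l holomorphic_on ball 0 r \<and> gs l \<in> ideal_gen X x S"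
    and eq: "\<forall>t\<in>ball 0 r. f' (\<phi>1 t) = (\<Sum>l<N. bs l t * gs l (\<phi>1 t)) \<and>
                          f' (\<phi>2 t) = (\<Sum>l<N. bs l t * gs l (\<phi>2 t))"
    using assms(1) unfolding curve_pair_combination_def by blast
  have "ball 0 (min r e) \<subseteq> ball 0 r" by auto
  with hol have "\<forall>l<N. bs l holomorphic_on ball 0 (min r e) \<and> gs l \<in> ideal_gen X x S"
    using holomorphic_on_subset by blast
  with \<open>r > 0\<close> eq assms(2,3) show ?thesis
    unfolding curve_pair_combination_def
    by (intro exI[of _ "min r e"] conjI exI[of _ N] exI[of _ bs] exI[of _ gs]) auto
qed

lemma ideal_gen_subset_lip_sat: "ideal_gen X x S \<subseteq> lip_sat X x S"
  by (auto simp: lip_sat_iff intro: curve_pair_combination_ideal_gen elim: ideal_genE)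

lemma lip_sat_add:
  assumes "f \<in> lip_sat X x S" "g \<in> lip_sat X x S"
  shows "(\<lambda>y. f y + g y) \<in> lip_sat X x S"
  unfolding lip_sat_iff
proof (intro conjI allI impI)
  show "anat X x (\<lambda>y. f y + g y)"
    using assms by (intro anat_add) (simp_all add: lip_sat_iff)
  fix \<phi>1 \<phi>2 assume "curve_germ X x \<phi>1" "curve_germ X x \<phi>2"
  with assms show "curve_pair_combination X x S \<phi>1 \<phi>2 (\<lambda>y. f y + g y)"
    by (intro curve_pair_combination_add) (simp_all add: lip_sat_iff)
qed

lemma lip_sat_mult:
  assumes "anat X x a" "f \<in> lip_sat X x S"
  shows "(\<lambda>y. a y * f y) \<in> lip_sat X x S"
  unfolding lip_sat_iff
proof (intro conjI allI impI)
  show "anat X x (\<lambda>y. a y * f y)"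
    using assms by (intro anat_mult) (simp_all add: lip_sat_iff)
  fix \<phi>1 \<phi>2 assume "curve_germ X x \<phi>1" "curve_germ X x \<phi>2"
  with assms show "curve_pair_combination X x S \<phi>1 \<phi>2 (\<lambda>y. a y * f y)"
    by (intro curve_pair_combination_mult) (simp_all add: lip_sat_iff)
qed

lemma lip_sat_germ_eq:
  assumes "anat X x f" "germ_eq X x f f'" "f' \<in> lip_sat X x S"
  shows "f \<in> lip_sat X x S"
  unfolding lip_sat_iff
proof (intro conjI allI impI)
  fix \<phi>1 \<phi>2 assume curves: "curve_germ X x \<phi>1" "curve_germ X x \<phi>2"
  obtain U where U: "open U" "x \<in> U" "\<forall>y\<in>X \<inter> U. f y = f' y"
    using assms(2) unfolding germ_eq_def by blast
  obtain e1 where "e1 > 0" "\<forall>t\<in>ball 0 e1. \<phi>1 t \<in> X \<inter> U"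
    using curve_germ_ball_into[OF curves(1) U(1,2)] by blast
  moreover obtain e2 where "e2 > 0" "\<forall>t\<in>ball 0 e2. \<phi>2 t \<in> X \<inter> U"
    using curve_germ_ball_into[OF curves(2) U(1,2)] by blast
  ultimately have "min e1 e2 > 0"
    "\<forall>t\<in>ball 0 (min e1 e2). f (\<phi>1 t) = f' (\<phi>1 t) \<and> f (\<phi>2 t) = f' (\<phi>2 t)"
    using U(3) by auto
  moreover have "curve_pair_combination X x S \<phi>1 \<phi>2 f'"
    using assms(3) curves unfolding lip_sat_iff by blast
  ultimately show "curve_pair_combination X x S \<phi>1 \<phi>2 f"
    using curve_pair_combination_cong by blast
qed (rule assms(1))

lemma germ_ideal_lip_sat: "germ_ideal X x (lip_sat X x S)"
  unfolding germ_ideal_def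
proof (intro conjI allI impI ballI)
  show "(\<lambda>y. 0) \<in> lip_sat X x S"
    using ideal_gen_zero ideal_gen_subset_lip_sat by blast
  show "anat X x f" if "f \<in> lip_sat X x S" for f
    using that by (simp add: lip_sat_iff)
  show "(\<lambda>y. f y + g y) \<in> lip_sat X x S" if "f \<in> lip_sat X x S" "g \<in> lip_sat X x S" for f g
    using that by (rule lip_sat_add)
  show "(\<lambda>y. a y * f y) \<in> lip_sat X x S" if "anat X x a" "f \<in> lip_sat X x S" for a f
    using that by (rule lip_sat_mult)
  show "f \<in> lip_sat X x S" if "anat X x f" "germ_eq X x f f'" "f' \<in> lip_sat X x S" for f f'
    using that by (rule lip_sat_germ_eq)
qed

lemma lip_sat_mono: "ideal_gen X x S \<subseteq> ideal_gen X x T \<Longrightarrow> lip_sat X x S \<subseteq> lip_sat X x T"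
  unfolding lip_sat_def by blast

section \<open>Minors\<close>

lemma permutes_lessThan_less: "\<sigma> permutes {..<k} \<Longrightarrow> i < k \<Longrightarrow> \<sigma> i < (k::nat)"
  using permutes_in_image[of \<sigma> "{..<k}" i] by simp

lemma kdet_cong: "(\<And>i l. i < k \<Longrightarrow> l < k \<Longrightarrow> A i l = B i l) \<Longrightarrow> kdet k A = kdet k B"
  unfolding kdet_def by (intro sum.cong refl arg_cong2[where f = "(*)"] prod.cong) (auto simp: permutes_lessThan_less)

lemma kdet_eq_det: "kdet k A = det (mat k k (\<lambda>(i, l). A i l))"
  unfolding kdet_def det_def'[OF mat_carrier] atLeast0LessThan
  by (intro sum.cong refl arg_cong2[where f = "(*)"] prod.cong) (auto simp: permutes_lessThan_less)

lemma kdet_identical_columns: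
  assumes "l0 < k" "l1 < k" "l0 \<noteq> l1" "\<And>i. A i l0 = A i l1"
  shows "kdet k A = 0"
  unfolding kdet_eq_det
  by (rule det_identical_columns[OF mat_carrier assms(3,1,2)]) (rule eq_vecI, auto simp: assms)

lemma kdet_laplace_column:
  assumes "l0 < k"
  shows "kdet k (\<lambda>i l. if l = l0 then v i else A i l) =
    (\<Sum>i<k. v i * ((-1)^(i + l0) * kdet (k - 1) (\<lambda>a b. A (insert_index i a) (insert_index l0 b))))"
proof -
  let ?B = "mat k k (\<lambda>(i, l). if l = l0 then v i else A i l)"
  have "mat_delete ?B i l0 = mat (k - 1) (k - 1) (\<lambda>(a, b). A (insert_index i a) (insert_index l0 b))" for i
    unfolding mat_delete_def insert_index_def by (rule eq_matI) auto
  then have "cofactor ?B i l0 = (-1)^(i + l0) * kdet (k - 1) (\<lambda>a b. A (insert_index i a) (insert_index l0 b))"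
    for i unfolding cofactor_def kdet_eq_det by simp
  then show ?thesis
    unfolding kdet_eq_det laplace_expansion_column[OF mat_carrier assms] using assms by simp
qed

lemma pair_dot_sum:
  "pair_dot \<psi> (\<lambda>y. \<Sum>l<N. as l y *s gs l y) y = (\<Sum>l<N. as l y * pair_dot \<psi> (gs l) y)"
proof -
  have "pair_dot \<psi> (\<lambda>y. \<Sum>l<N. as l y *s gs l y) y = (\<Sum>i\<in>UNIV. \<Sum>l<N. \<psi> y $ i * (as l y * gs l y $ i))"
    by (simp add: pair_dot_def sum_component sum_distrib_left)
  also have "\<dots> = (\<Sum>l<N. \<Sum>i\<in>UNIV. \<psi> y $ i * (as l y * gs l y $ i))"
    by (rule sum.swap)
  also have "\<dots> = (\<Sum>l<N. as l y * pair_dot \<psi> (gs l) y)"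
    by (simp add: pair_dot_def sum_distrib_left mult.left_commute)
  finally show ?thesis .
qed

lemma anat_pair_dot: "anat_vec X x \<psi> \<Longrightarrow> anat_vec X x h \<Longrightarrow> anat X x (pair_dot \<psi> h)"
  unfolding pair_dot_def by (intro anat_sum anat_mult anat_vec_component)

lemma pair_dot_image_module_gen:
  assumes "anat_vec X x \<psi>"
  shows "pair_dot \<psi> ` module_gen X x G \<subseteq> ideal_gen X x (pair_dot \<psi> ` G)"
proof
  fix f assume "f \<in> pair_dot \<psi> ` module_gen X x G"
  then obtain h N as gs where f: "f = pair_dot \<psi> h" and "anat_vec X x h"
    and coeffs: "\<forall>l<(N::nat). anat X x (as l) \<and> gs l \<in> G"
    and "germ_eq X x h (\<lambda>y. \<Sum>l<N. as l y *s gs l y)"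
    unfolding module_gen_def by blast
  then obtain U where "open U" "x \<in> U" and h: "\<forall>y\<in>X \<inter> U. h y = (\<Sum>l<N. as l y *s gs l y)"
    unfolding germ_eq_def by blast
  moreover have "pair_dot \<psi> h y = pair_dot \<psi> (\<lambda>y. \<Sum>l<N. as l y *s gs l y) y" if "y \<in> X \<inter> U" for y
    using h that unfolding pair_dot_def by simp
  ultimately have "germ_eq X x f (\<lambda>y. \<Sum>l<N. as l y * pair_dot \<psi> (gs l) y)"
    unfolding germ_eq_def f pair_dot_sum by blast
  moreover have "anat X x f"
    unfolding f using assms \<open>anat_vec X x h\<close> by (rule anat_pair_dot)
  ultimately show "f \<in> ideal_gen X x (pair_dot \<psi> ` G)"
    using coeffs by (intro ideal_genI[where as = as and gs = "\<lambda>l. pair_dot \<psi> (gs l)"]) auto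
qed

lemma M_S2_pair_dot_in_lip_sat:
  assumes "h \<in> M_S2 X x (module_gen X x (range g))" "anat_vec X x \<psi>"
    and "\<forall>j. pair_dot \<psi> (g j) \<in> ideal_gen X x T"
  shows "pair_dot \<psi> h \<in> lip_sat X x T"
proof -
  have "pair_dot \<psi> ` module_gen X x (range g) \<subseteq> ideal_gen X x (pair_dot \<psi> ` range g)"
    by (rule pair_dot_image_module_gen[OF assms(2)])
  also have "\<dots> \<subseteq> ideal_gen X x T"
    using assms(3) by (intro ideal_gen_least[OF germ_ideal_ideal_gen]) auto
  finally have "lip_sat X x (pair_dot \<psi> ` module_gen X x (range g)) \<subseteq> lip_sat X x T"
    by (intro lip_sat_mono ideal_gen_least[OF germ_ideal_ideal_gen])
  moreover have "pair_dot \<psi> h \<in> lip_sat X x (pair_dot \<psi> ` module_gen X x (range g))"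
    using assms(1,2) unfolding M_S2_def by blast
  ultimately show ?thesis by blast
qed

lemma cofactor_vector:
  fixes rs :: "nat \<Rightarrow> 'p::finite"
  assumes "l0 < k" "\<And>i l. anat X x (\<lambda>y. A y i l)"
  obtains \<psi> :: "complex^'n \<Rightarrow> complex^'p" where "anat_vec X x \<psi>"
    and "\<And>w y. pair_dot \<psi> w y = kdet k (\<lambda>i l. if l = l0 then w y $ rs i else A y i l)"
proof
  define C where "C i y = (-1)^(i + l0) * kdet (k - 1) (\<lambda>a b. A y (insert_index i a) (insert_index l0 b))"
    for i y
  define \<psi> :: "complex^'n \<Rightarrow> complex^'p" where "\<psi> y = (\<chi> p. \<Sum>i<k. if rs i = p then C i y else 0)" for y
  have "anat X x (C i)" for i
    unfolding C_def[abs_def] by (intro anat_mult anat_const anat_kdet assms(2))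
  then have "anat X x (\<lambda>y. if rs i = p then C i y else 0)" for i p
    by (cases "rs i = p") (simp_all add: anat_const)
  then show "anat_vec X x \<psi>"
    unfolding anat_vec_def \<psi>_def by (auto intro: anat_sum)
  fix w y
  have "pair_dot \<psi> w y = (\<Sum>p\<in>UNIV. \<Sum>i<k. if rs i = p then C i y * w y $ p else 0)"
    unfolding pair_dot_def \<psi>_def by (auto simp: sum_distrib_right intro!: sum.cong)
  also have "\<dots> = (\<Sum>i<k. \<Sum>p\<in>UNIV. if rs i = p then C i y * w y $ p else 0)"
    by (rule sum.swap)
  also have "\<dots> = (\<Sum>i<k. w y $ rs i * C i y)"
    by (simp add: mult.commute)
  also have "\<dots> = kdet k (\<lambda>i l. if l = l0 then w y $ rs i else A y i l)"
    unfolding C_def by (rule kdet_laplace_column[OF assms(1), symmetric])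
  finally show "pair_dot \<psi> w y = kdet k (\<lambda>i l. if l = l0 then w y $ rs i else A y i l)" .
qed

lemma minorsI: "(\<lambda>y. kdet k (\<lambda>i l. A y (rs i) (cs l))) \<in> minors k A"
  unfolding minors_def by blast

lemma minors_mat_of_subset_ideal_gen:
  assumes "\<forall>j. anat_vec X x (g j)"
  shows "minors k (mat_of g) \<subseteq> ideal_gen X x (minors k (mat_of g))"
proof (rule subset_ideal_gen)
  fix f assume "f \<in> minors k (mat_of g)"
  then show "anat X x f"
    using assms unfolding minors_def mat_of_def by (auto intro!: anat_kdet anat_vec_component)
qed

lemma anat_mat_hM:
  "anat_vec X x h \<Longrightarrow> \<forall>j. anat_vec X x (g j) \<Longrightarrow> anat X x (\<lambda>y. mat_hM h g y p c)"
  unfolding mat_hM_def by (cases c) (simp_all add: anat_vec_component)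

lemma minor_one_h_column_in_lip_sat:
  assumes g: "\<forall>j. anat_vec X x (g j)" and h: "h \<in> M_S2 X x (module_gen X x (range g))"
    and "l0 < k" "cs l0 = None" "\<forall>l<k. l \<noteq> l0 \<longrightarrow> cs l \<noteq> None"
  shows "(\<lambda>y. kdet k (\<lambda>i l. mat_hM h g y (rs i) (cs l))) \<in> lip_sat X x (minors k (mat_of g))"
    (is "?m \<in> lip_sat X x ?T")
proof -
  have "anat_vec X x h"
    using h by (simp add: M_S2_def)
  then have entries: "anat X x (\<lambda>y. mat_hM h g y (rs i) (cs l))" for i l
    using g by (rule anat_mat_hM)
  obtain \<psi> where "anat_vec X x \<psi>"
    and \<psi>: "\<And>w y. pair_dot \<psi> w y = kdet k (\<lambda>i l. if l = l0 then w y $ rs i else mat_hM h g y (rs i) (cs l))"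
    using cofactor_vector[where rs = rs and A = "\<lambda>y i l. mat_hM h g y (rs i) (cs l)", OF \<open>l0 < k\<close> entries]
    by blast
  have "pair_dot \<psi> h = ?m"
    unfolding \<psi> by (intro ext kdet_cong) (auto simp: mat_hM_def \<open>cs l0 = None\<close>)
  moreover have "pair_dot \<psi> (g j) \<in> ideal_gen X x ?T" for j
  proof -
    have "pair_dot \<psi> (g j) = (\<lambda>y. kdet k (\<lambda>i l. mat_of g y (rs i) (if l = l0 then j else the (cs l))))"
      unfolding \<psi> using assms(5)
      by (intro ext kdet_cong) (auto simp: mat_hM_def mat_of_def split: option.split)
    then have "pair_dot \<psi> (g j) \<in> ?T"
      using minorsI[where rs = rs and cs = "\<lambda>l. if l = l0 then j else the (cs l)"] by simp
    then show ?thesis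
      by (rule subsetD[OF minors_mat_of_subset_ideal_gen[OF g]])
  qed
  ultimately show ?thesis
    using M_S2_pair_dot_in_lip_sat[OF h \<open>anat_vec X x \<psi>\<close>] by simp
qed

lemma minor_mat_hM_in_lip_sat:
  assumes g: "\<forall>j. anat_vec X x (g j)" and h: "h \<in> M_S2 X x (module_gen X x (range g))"
  shows "(\<lambda>y. kdet k (\<lambda>i l. mat_hM h g y (rs i) (cs l))) \<in> lip_sat X x (minors k (mat_of g))"
    (is "?m \<in> lip_sat X x ?T")
proof -
  consider (no_h) "\<forall>l<k. cs l \<noteq> None"
    | (two_h) l0 l1 where "l0 < k" "l1 < k" "l0 \<noteq> l1" "cs l0 = None" "cs l1 = None"
    | (one_h) l0 where "l0 < k" "cs l0 = None" "\<forall>l<k. l \<noteq> l0 \<longrightarrow> cs l \<noteq> None"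
    by blast
  then show ?thesis
  proof cases
    case no_h
    then have "?m = (\<lambda>y. kdet k (\<lambda>i l. mat_of g y (rs i) (the (cs l))))"
      by (intro ext kdet_cong) (auto simp: mat_hM_def mat_of_def split: option.split)
    moreover have "(\<lambda>y. kdet k (\<lambda>i l. mat_of g y (rs i) (the (cs l)))) \<in> ?T"
      by (rule minorsI)
    moreover have "?T \<subseteq> lip_sat X x ?T"
      by (rule subset_trans[OF minors_mat_of_subset_ideal_gen[OF g] ideal_gen_subset_lip_sat])
    ultimately show ?thesis by auto
  next
    case two_h
    then have "?m = (\<lambda>y. 0)"
      by (intro ext kdet_identical_columns[of l0 k l1]) (simp_all add: mat_hM_def)
    then show ?thesis
      using subsetD[OF ideal_gen_subset_lip_sat ideal_gen_zero] by simp
  next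
    case one_h
    then show ?thesis
      by (rule minor_one_h_column_in_lip_sat[OF g h])
  qed
qed

theorem proposition2p11:
  fixes X :: "(complex^'n) set" and x :: "complex^'n"
    and g :: "'m::finite \<Rightarrow> complex^'n \<Rightarrow> complex^'p" and k :: nat
  assumes "analytic_variety X" and "x \<in> X"
    and "\<forall>j. anat_vec X x (g j)"
    and "\<forall>Z. irreducible_component X x Z \<longrightarrow> generic_rank_on x Z (mat_of g) k"
  shows "M_S2 X x (module_gen X x (range g)) \<subseteq> M_S3 X x k g"
proof
  fix h assume h: "h \<in> M_S2 X x (module_gen X x (range g))"
  have "minors k (mat_hM h g) \<subseteq> lip_sat X x (minors k (mat_of g))"
  proof
    fix m assume "m \<in> minors k (mat_hM h g)"
    then obtain rs cs where "m = (\<lambda>y. kdet k (\<lambda>i l. mat_hM h g y (rs i) (cs l)))"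
      unfolding minors_def by blast
    then show "m \<in> lip_sat X x (minors k (mat_of g))"
      using minor_mat_hM_in_lip_sat[OF assms(3) h] by simp
  qed
  then have "Ik X x k (mat_hM h g) \<subseteq> lip_sat X x (minors k (mat_of g))"
    unfolding Ik_def by (rule ideal_gen_least[OF germ_ideal_lip_sat])
  with h show "h \<in> M_S3 X x k g"
    by (simp add: M_S2_def M_S3_def)
qed

end
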